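(* Let $\alpha,\beta,\gamma>0$ and let $X$ have the hyper-exponential (generalized gamma) density $$\rho(t)=\frac{\gamma\,\beta^{-\alpha/\gamma}}{\Gamma(\alpha/\gamma)}\,t^{\alpha-1}\exp(-t^\gamma/\beta),\qquad t>0.$$ Then, for every choice of the parameters $\alpha,\beta,\gamma>0$, the distribution of $X$ is $q$-moment determinate for every $q\in(0,1)$ (even though it is moment indeterminate in the classical sense when $\gamma\in(0,\tfrac12)$).
   Context: For $0<q<1$: a $q$-density of $X\ge0$ is a function $f$ on $(0,\infty)$ with $F_X(x)=x(1-q)\sum_{j\ge0}f(xq^j)q^j$ for all $x>0$ (one may take $f(t)=\frac{F_X(t)-F_X(qt)}{t(1-q)}$); the $q$-moments are $m_q(n;X)=(1-q)\sum_{j\in\mathbb{Z}}q^{j(n+1)}f(q^j)$, $n\in\mathbb{N}_0$; $P_X$ is $q$-moment determinate if every $Y$ with $q$-density $g$ and $m_q(k;Y)=m_q(k;X)$ for all $k\in\mathbb{N}_0$ satisfies $g(q^j)=f(q^j)$ for all $j\in\mathbb{Z}$. The moments of $X$ are $\mu_n=\beta^{n/\gamma}\Gamma((n+\alpha)/\gamma)/\Gamma(\alpha/\gamma)$. *)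

theory Defs
  imports "HOL-Probability.Probability"
begin

definition gg_density :: "real \<Rightarrow> real \<Rightarrow> real \<Rightarrow> real \<Rightarrow> real" where
  "gg_density \<alpha> \<beta> \<gamma> t =
     \<gamma> * \<beta> powr (-\<alpha>/\<gamma>) / Gamma (\<alpha>/\<gamma>) * t powr (\<alpha> - 1) * exp (- (t powr \<gamma>) / \<beta>)"

definition gen_gamma_dist :: "real \<Rightarrow> real \<Rightarrow> real \<Rightarrow> real measure" where
  "gen_gamma_dist \<alpha> \<beta> \<gamma> =
     density lborel (\<lambda>t. ennreal (if t > 0 then gg_density \<alpha> \<beta> \<gamma> t else 0))"

definition is_q_density :: "real \<Rightarrow> real measure \<Rightarrow> (real \<Rightarrow> real) \<Rightarrow> bool" where
  "is_q_density q M f \<longleftrightarrow>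
     (\<forall>x>0. (\<lambda>j::nat. x * (1 - q) * f (x * q ^ j) * q ^ j) sums (cdf M x))"

definition q_moment_exists :: "real \<Rightarrow> (real \<Rightarrow> real) \<Rightarrow> nat \<Rightarrow> bool" where
  "q_moment_exists q f n \<longleftrightarrow>
     (\<lambda>j::int. q powi (j * (int n + 1)) * f (q powi j)) summable_on UNIV"

definition q_moment :: "real \<Rightarrow> (real \<Rightarrow> real) \<Rightarrow> nat \<Rightarrow> real" where
  "q_moment q f n = (1 - q) * (\<Sum>\<^sub>\<infinity>j::int. q powi (j * (int n + 1)) * f (q powi j))"

definition q_moment_determinate :: "real \<Rightarrow> real measure \<Rightarrow> bool" where
  "q_moment_determinate q M \<longleftrightarrow>
     (\<forall>f. is_q_density q M f \<longrightarrow>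
       (\<forall>N g. prob_space N \<and> sets N = sets borel \<and> measure N {..<0} = 0 \<and>
              is_q_density q N g \<and>
              (\<forall>k. q_moment_exists q g k \<and> q_moment q g k = q_moment q f k) \<longrightarrow>
              (\<forall>j::int. g (q powi j) = f (q powi j))))"

end

theory Submission
  imports Defs "HOL-Real_Asymp.Real_Asymp"
begin

text \<open>
  A q-density is determined on the lattice of points q^j by the masses F(q^j) - F(q^(j+1))
  of the cells (q^(j+1), q^j], and its q-moments are the ordinary moments of the discrete
  measure with these masses at the points q^j. The theorem thus reduces to a moment problem
  on a geometric lattice, which is determinate once the moments of order 4n grow at most like
  q^(-n^2): if the difference a of two solutions has vanishing moments, multiplying by the
  polynomial prod(i=1..n) (1 - q^i x / q^t), which vanishes at the n lattice points just above
  q^t, isolates a_t up to errors of order q^n and q^(2n^2) times that moment. For the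
  generalized gamma distribution the cell masses decay like exp(-q^(gamma j) / beta), double
  exponentially as j -> -oo, which beats the Gaussian weight q^(4nj) <= q^(-n^2) q^(-4j^2)
  for every gamma > 0.
\<close>

lemma exp_neg_div_one_minus_le:
  fixes y :: real
  assumes "0 \<le> y" "y < 1"
  shows "exp (- y / (1 - y)) \<le> 1 - y"
proof -
  have "ln (1 / (1 - y)) \<le> 1 / (1 - y) - 1"
    using assms by (intro ln_le_minus_one) auto
  also have "\<dots> = y / (1 - y)"
    using assms by (simp add: field_simps)
  finally have "- y / (1 - y) \<le> ln (1 - y)"
    using assms by (simp add: ln_div)
  then show ?thesis
    using assms by (metis exp_le_cancel_iff exp_ln diff_gt_0_iff_gt)
qed

lemma prod_one_minus_power_ge:
  fixes q :: real
  assumes "0 \<le> q" "q < 1"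
  shows "exp (- 1 / (1 - q)^2) \<le> (\<Prod>i=1..n. 1 - q ^ i)"
proof -
  have "(\<Sum>i=1..n. q ^ i) \<le> (\<Sum>i. q ^ i)"
    using assms by (intro sum_le_suminf summable_geometric) auto
  also have "\<dots> = 1 / (1 - q)"
    using assms by (simp add: suminf_geometric)
  finally have "exp (- 1 / (1 - q)^2) \<le> exp (- (\<Sum>i=1..n. q ^ i) / (1 - q))"
    using assms by (simp add: power2_eq_square divide_right_mono flip: divide_divide_eq_left)
  also have "\<dots> = (\<Prod>i=1..n. exp (- (q ^ i) / (1 - q)))"
    by (simp add: exp_sum[symmetric] sum_negf sum_divide_distrib)
  also have "\<dots> \<le> (\<Prod>i=1..n. 1 - q ^ i)"
  proof (rule prod_mono)
    fix i assume "i \<in> {1..n}"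
    then have qi: "q ^ i \<le> q" "0 \<le> q ^ i"
      using assms power_decreasing[of 1 i q] by auto
    have "exp (- (q ^ i) / (1 - q)) \<le> exp (- (q ^ i) / (1 - q ^ i))"
      using qi assms by (simp add: frac_le)
    also have "\<dots> \<le> 1 - q ^ i"
      using qi assms by (intro exp_neg_div_one_minus_le) auto
    finally show "0 \<le> exp (- (q ^ i) / (1 - q)) \<and> exp (- (q ^ i) / (1 - q)) \<le> 1 - q ^ i"
      by simp
  qed
  finally show ?thesis .
qed

lemma power_int_diff_power:
  fixes q :: "'a :: field"
  assumes "q \<noteq> 0"
  shows "(q powi (j - s)) ^ m = (q powi (- s)) ^ m * (q powi j) ^ m"
proof -
  have "q powi (j - s) = q powi (- s) * q powi j"
    using assms by (simp add: power_int_add[symmetric])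
  then show ?thesis by (simp add: power_mult_distrib)
qed

lemma power_int_power_le_gaussian:
  fixes q :: real
  assumes "0 < q" "q \<le> 1"
  shows "(q powi j) ^ (4 * n) \<le> q powi (- 4 * j\<^sup>2) / q ^ (n\<^sup>2)"
proof -
  have "(q powi j) ^ (4 * n) = q powi (j * int (4 * n))"
    by (simp add: power_int_power')
  also have "\<dots> \<le> q powi (- 4 * j\<^sup>2 - int (n\<^sup>2))"
  proof (rule power_int_decreasing)
    have "0 \<le> (int n + 2 * j)\<^sup>2"
      by simp
    then show "- 4 * j\<^sup>2 - int (n\<^sup>2) \<le> j * int (4 * n)"
      by (simp add: power2_eq_square algebra_simps)
  qed (use assms in auto)
  also have "\<dots> = q powi (- 4 * j\<^sup>2) / q powi int (n\<^sup>2)"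
    using assms by (intro power_int_diff) auto
  also have "q powi int (n\<^sup>2) = q ^ (n\<^sup>2)"
    by (rule power_int_of_nat)
  finally show ?thesis .
qed

lemma summable_on_abs_real_iff:
  fixes f :: "'a \<Rightarrow> real"
  shows "(\<lambda>x. \<bar>f x\<bar>) summable_on A \<longleftrightarrow> f summable_on A"
  using summable_on_iff_abs_summable_on_real[of f A] by simp

lemma abs_le_infsum_if_has_sum_0:
  fixes h e :: "'a \<Rightarrow> real"
  assumes h: "(h has_sum 0) UNIV" and e: "e summable_on UNIV" "\<And>x. 0 \<le> e x"
    and h_le_e: "\<And>x. x \<noteq> t \<Longrightarrow> \<bar>h x\<bar> \<le> e x"
  shows "\<bar>h t\<bar> \<le> infsum e UNIV"
proof -
  have h_rest: "h summable_on (- {t})"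
    using h by (auto intro: summable_on_subset has_sum_imp_summable)
  have "infsum h UNIV = h t + infsum h (- {t})"
    using infsum_insert[OF h_rest, of t] by (simp add: insert_Diff_if Compl_eq_Diff_UNIV)
  then have "\<bar>h t\<bar> = \<bar>infsum h (- {t})\<bar>"
    using h by (simp add: infsumI)
  also have "\<dots> \<le> (\<Sum>\<^sub>\<infinity>x\<in>- {t}. \<bar>h x\<bar>)"
    using h_rest norm_infsum_bound[of h "- {t}"] by (simp add: summable_on_abs_real_iff)
  also have "\<dots> \<le> infsum e (- {t})"
    using h_rest e h_le_e
    by (intro infsum_mono) (auto intro: summable_on_subset simp: summable_on_abs_real_iff)
  also have "\<dots> \<le> infsum e UNIV"
    using e by (intro infsum_mono2) (auto intro: summable_on_subset)
  finally show ?thesis .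
qed

lemma summable_exp_quadratic_minus_exp:
  fixes A B c D :: real
  assumes "0 < c" "0 < D"
  shows "summable (\<lambda>n::nat. exp (A * real n ^ 2 + B * real n - c * exp (D * real n)))"
proof (rule summable_comparison_test_ev)
  have "filterlim (\<lambda>y::real. A * y ^ 2 + B * y + y - c * exp (D * y)) at_bot at_top"
    using assms by real_asymp
  then have "\<forall>\<^sub>F y in at_top. A * y ^ 2 + B * y + y - c * exp (D * y) \<le> 0"
    unfolding filterlim_at_bot by blast
  then have "\<forall>\<^sub>F n in sequentially. A * real n ^ 2 + B * real n + real n - c * exp (D * real n) \<le> 0"
    using filterlim_real_sequentially by (rule eventually_compose_filterlim)
  then show "\<forall>\<^sub>F n in sequentially. norm (exp (A * real n ^ 2 + B * real n - c * exp (D * real n))) \<le> exp (- 1) ^ n"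
    by eventually_elim (simp flip: exp_of_nat_mult)
  show "summable (\<lambda>n. exp (- 1 :: real) ^ n)"
    by (rule summable_geometric) simp
qed

lemma summable_on_int_if_summable_on_nonpos:
  fixes f :: "int \<Rightarrow> real"
  assumes "(\<lambda>n::nat. f (- int n)) summable_on UNIV" and "\<And>j. 0 < j \<Longrightarrow> f j = 0"
  shows "f summable_on UNIV"
proof -
  have "inj (\<lambda>n::nat. - int n)"
    by (auto intro: injI)
  then have "f summable_on range (\<lambda>n::nat. - int n)"
    using assms(1) by (simp add: summable_on_reindex comp_def)
  moreover have "f j = 0" if "j \<notin> range (\<lambda>n::nat. - int n)" for j
  proof -
    have "j \<in> range (\<lambda>n::nat. - int n)" if "j \<le> 0"
      using that by (intro range_eqI[of _ _ "nat (- j)"]) simp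
    then show ?thesis
      using \<open>j \<notin> range (\<lambda>n::nat. - int n)\<close> assms(2)[of j] by linarith
  qed
  ultimately show ?thesis
    by (subst summable_on_cong_neutral[of "range (\<lambda>n::nat. - int n)" UNIV f]) auto
qed

section \<open>Moment problems on a geometric lattice\<close>

definition lattice_annihilator :: "real \<Rightarrow> int \<Rightarrow> nat \<Rightarrow> int \<Rightarrow> real" where
  "lattice_annihilator q t n j = (\<Prod>i=1..n. 1 - q powi (j - t + int i))"

lemma has_sum_lattice_annihilator:
  fixes q :: real
  assumes "q \<noteq> 0" and moments: "\<And>m. ((\<lambda>j. a j * (q powi j) ^ m) has_sum 0) UNIV"
  shows "((\<lambda>j. a j * lattice_annihilator q t n j * (q powi j) ^ m) has_sum 0) UNIV"
proof (induction n arbitrary: m)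
  case 0
  show ?case using moments[of m] by (simp add: lattice_annihilator_def)
next
  case (Suc n)
  define c where "c = q powi (int (Suc n) - t)"
  have "((\<lambda>j. a j * lattice_annihilator q t n j * (q powi j) ^ m
            + (- c) * (a j * lattice_annihilator q t n j * (q powi j) ^ Suc m)) has_sum 0 + (- c) * 0) UNIV"
    by (intro has_sum_add has_sum_cmult_right Suc.IH)
  moreover have step: "lattice_annihilator q t (Suc n) j
      = lattice_annihilator q t n j - c * lattice_annihilator q t n j * q powi j" for j
  proof -
    have "q powi (j - t + int (Suc n)) = c * q powi j"
      using assms(1) by (simp add: c_def flip: power_int_add) (simp add: algebra_simps)
    then show ?thesis
      unfolding lattice_annihilator_def by (subst prod.nat_ivl_Suc') (auto simp: algebra_simps)
  qed
  then have "a j * lattice_annihilator q t n j * (q powi j) ^ m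
            + (- c) * (a j * lattice_annihilator q t n j * (q powi j) ^ Suc m)
           = a j * lattice_annihilator q t (Suc n) j * (q powi j) ^ m" for j
    by (simp only: step) (simp add: algebra_simps)
  ultimately show ?case by simp
qed

lemma lattice_annihilator_eq_0:
  assumes "t - int n \<le> j" "j < t"
  shows "lattice_annihilator q t n j = 0"
  unfolding lattice_annihilator_def
  by (rule prod_zero) (use assms in \<open>auto intro!: bexI[of _ "nat (t - j)"]\<close>)

lemma abs_lattice_annihilator_le_1:
  fixes q :: real
  assumes "0 < q" "q \<le> 1" "t < j"
  shows "\<bar>lattice_annihilator q t n j\<bar> \<le> 1"
proof -
  have "0 \<le> 1 - q powi (j - t + int i) \<and> 1 - q powi (j - t + int i) \<le> 1" for i
    using assms power_int_decreasing[of 0 "j - t + int i" q] by auto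
  then show ?thesis
    unfolding lattice_annihilator_def abs_prod by (intro prod_le_1) auto
qed

lemma abs_lattice_annihilator_le:
  fixes q :: real
  assumes "0 < q" "q \<le> 1" "j < t - int n"
  shows "\<bar>lattice_annihilator q t n j\<bar> \<le> (q powi (j - t)) ^ n"
proof -
  have "\<bar>1 - q powi (j - t + int i)\<bar> \<le> q powi (j - t)" if "i \<in> {1..n}" for i
  proof -
    have "1 \<le> q powi (j - t + int i)"
      using assms that power_int_decreasing[of "j - t + int i" 0 q] by auto
    moreover have "q powi (j - t + int i) \<le> q powi (j - t)"
      using assms by (intro power_int_decreasing) auto
    ultimately show ?thesis by simp
  qed
  then have "\<bar>lattice_annihilator q t n j\<bar> \<le> (\<Prod>i=1..n. q powi (j - t))"
    unfolding lattice_annihilator_def abs_prod by (intro prod_mono) auto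
  then show ?thesis by simp
qed

lemma lattice_annihilator_center:
  "lattice_annihilator q t n t = (\<Prod>i=1..n. 1 - q ^ i)"
  by (simp add: lattice_annihilator_def)

lemma power_int_power_le_far:
  fixes q :: real
  assumes "0 < q" "q \<le> 1" "k < - int n"
  shows "(q powi k) ^ (2 * n) \<le> q ^ (2 * n * (n + 1)) * (q powi k) ^ (4 * n)"
proof -
  define y where "y = q powi k"
  have "q ^ (n + 1) * y = q powi (k + int (n + 1))"
    using assms by (simp add: y_def power_int_add mult.commute)
  also have "1 \<le> \<dots>"
    using assms power_int_decreasing[of "k + int (n + 1)" 0 q] by simp
  finally have "1 \<le> (q ^ (n + 1) * y) ^ (2 * n)"
    by (rule one_le_power)
  then have "y ^ (2 * n) \<le> y ^ (2 * n) * (q ^ (n + 1) * y) ^ (2 * n)"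
    using assms by (simp add: y_def)
  also have "\<dots> = q ^ (2 * n * (n + 1)) * y ^ (4 * n)"
    by (simp add: power_mult_distrib mult.commute flip: power_mult power_add)
  finally show ?thesis
    by (simp add: y_def)
qed

lemma lattice_annihilator_weight_le:
  fixes q :: real
  assumes q: "0 < q" "q < 1" and "j \<noteq> t"
  shows "\<bar>lattice_annihilator q t n j\<bar> * (q powi (j - t)) ^ n
    \<le> q ^ n + q ^ (2 * n * (n + 1)) * (q powi (j - t)) ^ (4 * n)"
proof -
  define P where "P = lattice_annihilator q t n j"
  define y where "y = q powi (j - t)"
  have y_pos: "0 < y"
    using q by (simp add: y_def)
  have right_nonneg: "0 \<le> q ^ (2 * n * (n + 1)) * y ^ (4 * n)"
    using q y_pos by simp
  consider "t < j" | "t - int n \<le> j" "j < t" | "j < t - int n"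
    using \<open>j \<noteq> t\<close> by linarith
  then have "\<bar>P\<bar> * y ^ n \<le> q ^ n + q ^ (2 * n * (n + 1)) * y ^ (4 * n)"
  proof cases
    case 1
    have "y \<le> q"
      using q 1 power_int_decreasing[of 1 "j - t" q] by (simp add: y_def)
    then have "y ^ n \<le> q ^ n"
      using y_pos by (intro power_mono) auto
    moreover have "\<bar>P\<bar> \<le> 1"
      using q 1 by (simp add: P_def abs_lattice_annihilator_le_1)
    ultimately have "\<bar>P\<bar> * y ^ n \<le> 1 * q ^ n"
      using y_pos by (intro mult_mono) auto
    then show ?thesis
      using right_nonneg by simp
  next
    case 2
    then show ?thesis
      using q y_pos by (simp add: P_def lattice_annihilator_eq_0)
  next
    case 3
    have "\<bar>P\<bar> * y ^ n \<le> y ^ n * y ^ n"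
      using q 3 y_pos by (intro mult_right_mono) (simp_all add: P_def y_def abs_lattice_annihilator_le)
    also have "\<dots> = y ^ (2 * n)"
      by (metis power_add mult_2)
    also have "\<dots> \<le> q ^ (2 * n * (n + 1)) * y ^ (4 * n)"
      unfolding y_def using q 3 by (intro power_int_power_le_far) auto
    finally show ?thesis
      using q by (simp add: add_increasing)
  qed
  then show ?thesis
    by (simp only: P_def y_def)
qed

lemma infsum_shifted_lattice_moment:
  fixes q :: real
  assumes "q \<noteq> 0"
  shows "(\<Sum>\<^sub>\<infinity>j. \<bar>a j\<bar> * (q powi (j - s)) ^ m) = (q powi (- s)) ^ m * (\<Sum>\<^sub>\<infinity>j. \<bar>a j\<bar> * (q powi j) ^ m)"
  using assms infsum_cmult_right'[of "(q powi (- s)) ^ m" "\<lambda>j. \<bar>a j\<bar> * (q powi j) ^ m"]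
  by (simp add: power_int_diff_power mult_ac)

lemma abs_summable_shifted_lattice_moment:
  fixes q :: real
  assumes "0 < q" "(\<lambda>j. a j * (q powi j) ^ m) summable_on UNIV"
  shows "(\<lambda>j. \<bar>a j\<bar> * (q powi (j - s)) ^ m) summable_on UNIV"
proof -
  have "(\<lambda>j. (q powi (- s)) ^ m * \<bar>a j * (q powi j) ^ m\<bar>) summable_on UNIV"
    using assms(2) by (intro summable_on_cmult_right) (simp add: summable_on_abs_real_iff)
  moreover have "(q powi (- s)) ^ m * \<bar>a j * (q powi j) ^ m\<bar> = \<bar>a j\<bar> * (q powi (j - s)) ^ m" for j
  proof -
    have "\<bar>(q powi j) ^ m\<bar> = (q powi j) ^ m"
      using assms(1) by simp
    then show ?thesis
      using assms(1) by (simp add: abs_mult power_int_diff_power[of q j s m])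
  qed
  ultimately show ?thesis by simp
qed

lemma lattice_point_bound:
  fixes q :: real
  assumes q: "0 < q" "q < 1"
    and moments: "\<And>m. ((\<lambda>j. a j * (q powi j) ^ m) has_sum 0) UNIV"
  shows "\<bar>a t\<bar> * exp (- 1 / (1 - q)^2)
    \<le> q ^ n * (\<Sum>\<^sub>\<infinity>j. \<bar>a j\<bar>)
      + q ^ (2 * n * (n + 1)) * (\<Sum>\<^sub>\<infinity>j. \<bar>a j\<bar> * (q powi (j - t)) ^ (4 * n))"
proof -
  define P where "P = lattice_annihilator q t n"
  define h where "h j = a j * P j * (q powi (j - t)) ^ n" for j
  define e where "e j = q ^ n * \<bar>a j\<bar> + q ^ (2 * n * (n + 1)) * (\<bar>a j\<bar> * (q powi (j - t)) ^ (4 * n))" for j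
  have summable: "(\<lambda>j. \<bar>a j\<bar> * (q powi (j - s)) ^ m) summable_on UNIV" for s m
    using moments q by (intro abs_summable_shifted_lattice_moment) (auto intro: has_sum_imp_summable)
  have "((\<lambda>j. a j * P j * (q powi j) ^ n) has_sum 0) UNIV"
    unfolding P_def using q moments by (intro has_sum_lattice_annihilator) auto
  then have "((\<lambda>j. (q powi (- t)) ^ n * (a j * P j * (q powi j) ^ n)) has_sum (q powi (- t)) ^ n * 0) UNIV"
    by (rule has_sum_cmult_right)
  moreover have "(q powi (- t)) ^ n * (a j * P j * (q powi j) ^ n) = h j" for j
    using q by (simp add: h_def power_int_diff_power)
  ultimately have h_sum: "(h has_sum 0) UNIV"
    by simp
  have e_sum: "e summable_on UNIV"
    using summable[of 0 0] summable[of t "4 * n"]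
    unfolding e_def by (intro summable_on_add summable_on_cmult_right) auto
  have e_nonneg: "0 \<le> e j" for j
    using q by (simp add: e_def)
  have h_le_e: "\<bar>h j\<bar> \<le> e j" if "j \<noteq> t" for j
  proof -
    have "\<bar>h j\<bar> = \<bar>a j\<bar> * (\<bar>P j\<bar> * (q powi (j - t)) ^ n)"
      using q by (simp add: h_def abs_mult)
    also have "\<dots> \<le> \<bar>a j\<bar> * (q ^ n + q ^ (2 * n * (n + 1)) * (q powi (j - t)) ^ (4 * n))"
      unfolding P_def using q that by (intro mult_left_mono lattice_annihilator_weight_le) auto
    also have "\<dots> = e j"
      by (simp add: e_def algebra_simps)
    finally show ?thesis .
  qed
  have "\<bar>h t\<bar> \<le> infsum e UNIV"
    using h_sum e_sum e_nonneg h_le_e by (rule abs_le_infsum_if_has_sum_0)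
  also have "infsum e UNIV = q ^ n * (\<Sum>\<^sub>\<infinity>j. \<bar>a j\<bar>)
      + q ^ (2 * n * (n + 1)) * (\<Sum>\<^sub>\<infinity>j. \<bar>a j\<bar> * (q powi (j - t)) ^ (4 * n))"
    using summable[of 0 0] summable[of t "4 * n"] unfolding e_def
    by (subst infsum_add) (auto intro: summable_on_cmult_right simp: infsum_cmult_right)
  finally have "\<bar>h t\<bar> \<le> \<dots>" .
  moreover have "exp (- 1 / (1 - q)^2) \<le> P t"
    using q prod_one_minus_power_ge[of q n] by (simp add: P_def lattice_annihilator_center)
  then have "\<bar>a t\<bar> * exp (- 1 / (1 - q)^2) \<le> \<bar>h t\<bar>"
    by (simp add: h_def abs_mult mult_left_mono)
  ultimately show ?thesis
    by linarith
qed

lemma lattice_moment_uniqueness: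
  fixes q C :: real
  assumes q: "0 < q" "q < 1"
    and moments: "\<And>m. ((\<lambda>j. a j * (q powi j) ^ m) has_sum 0) UNIV"
    and growth: "\<And>n. (\<Sum>\<^sub>\<infinity>j. \<bar>a j\<bar> * (q powi j) ^ (4 * n)) \<le> C / q ^ (n\<^sup>2)"
  shows "a t = 0"
proof -
  define L where "L = - ln q"
  have L: "0 < L" and q_eq: "q = exp (- L)"
    using q by (auto simp: L_def)
  define A where "A = (\<Sum>\<^sub>\<infinity>j. \<bar>a j\<bar>)"
  define D where "D n = exp (- L * (real n ^ 2 + 2 * real n - 4 * real n * of_int t))" for n
  have bound: "\<bar>a t\<bar> * exp (- 1 / (1 - q)^2) \<le> q ^ n * A + C * D n" for n
  proof -
    have "(\<Sum>\<^sub>\<infinity>j. \<bar>a j\<bar> * (q powi (j - t)) ^ (4 * n))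
        = (q powi (- t)) ^ (4 * n) * (\<Sum>\<^sub>\<infinity>j. \<bar>a j\<bar> * (q powi j) ^ (4 * n))"
      using q by (intro infsum_shifted_lattice_moment) auto
    also have "\<dots> \<le> (q powi (- t)) ^ (4 * n) * (C / q ^ (n\<^sup>2))"
      using q growth by (intro mult_left_mono) auto
    finally have "q ^ (2 * n * (n + 1)) * (\<Sum>\<^sub>\<infinity>j. \<bar>a j\<bar> * (q powi (j - t)) ^ (4 * n))
        \<le> q ^ (2 * n * (n + 1)) * ((q powi (- t)) ^ (4 * n) * (C / q ^ (n\<^sup>2)))"
      using q by (intro mult_left_mono) auto
    also have "\<dots> = C * D n"
    proof -
      have "q ^ (2 * n * (n + 1)) = exp (real (2 * n * (n + 1)) * - L)"
        "(q powi (- t)) ^ (4 * n) = exp (real (4 * n) * (of_int (- t) * - L))"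
        "q ^ (n\<^sup>2) = exp (real (n\<^sup>2) * - L)"
        unfolding q_eq by (simp_all only: exp_power_int exp_of_nat_mult)
      moreover have "exp a * (exp b * (C / exp c)) = C * exp (a + b - c)" for a b c
        by (simp add: exp_add exp_diff)
      ultimately show ?thesis
        unfolding D_def by (simp add: algebra_simps power2_eq_square)
    qed
    finally show ?thesis
      using lattice_point_bound[OF q moments, of t n] unfolding A_def by linarith
  qed
  have "(\<lambda>n. q ^ n) \<longlonglongrightarrow> 0"
    using q by (intro LIMSEQ_power_zero) auto
  moreover have "D \<longlonglongrightarrow> 0"
    unfolding D_def using L by real_asymp
  ultimately have "(\<lambda>n. q ^ n * A + C * D n) \<longlonglongrightarrow> 0 * A + C * 0"
    by (intro tendsto_add tendsto_mult tendsto_const)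
  then have "\<bar>a t\<bar> * exp (- 1 / (1 - q)^2) \<le> 0"
    using bound by (intro LIMSEQ_le_const) auto
  then show ?thesis
    by (simp add: mult_le_0_iff)
qed

lemma infsum_abs_diff_le:
  fixes u v w :: "'a \<Rightarrow> real"
  assumes nonneg: "\<And>x. 0 \<le> u x" "\<And>x. 0 \<le> v x" "\<And>x. 0 \<le> w x"
    and sums: "(\<lambda>x. u x * w x) summable_on A" "(\<lambda>x. v x * w x) summable_on A"
    and same: "(\<Sum>\<^sub>\<infinity>x\<in>A. v x * w x) = (\<Sum>\<^sub>\<infinity>x\<in>A. u x * w x)"
  shows "(\<Sum>\<^sub>\<infinity>x\<in>A. \<bar>v x - u x\<bar> * w x) \<le> 2 * (\<Sum>\<^sub>\<infinity>x\<in>A. u x * w x)"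
proof -
  have sum: "(\<lambda>x. v x * w x + u x * w x) summable_on A"
    using sums by (intro summable_on_add)
  have le: "\<bar>v x - u x\<bar> * w x \<le> v x * w x + u x * w x" for x
  proof -
    have "\<bar>v x - u x\<bar> * w x \<le> (v x + u x) * w x"
      using nonneg[of x] by (intro mult_right_mono) (auto simp: abs_le_iff)
    then show ?thesis
      by (simp only: distrib_right)
  qed
  have "(\<Sum>\<^sub>\<infinity>x\<in>A. \<bar>v x - u x\<bar> * w x) \<le> (\<Sum>\<^sub>\<infinity>x\<in>A. v x * w x + u x * w x)"
    using summable_on_comparison_test[OF sum le] nonneg sum le by (intro infsum_mono) auto
  also have "\<dots> = 2 * (\<Sum>\<^sub>\<infinity>x\<in>A. u x * w x)"
    using infsum_add[OF sums(2,1)] same by simp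
  finally show ?thesis .
qed

lemma nonneg_lattice_moments_unique:
  fixes q C :: real and u v :: "int \<Rightarrow> real"
  assumes q: "0 < q" "q < 1" and nonneg: "\<And>j. 0 \<le> u j" "\<And>j. 0 \<le> v j"
    and u_sum: "\<And>k. (\<lambda>j. u j * (q powi j) ^ k) summable_on UNIV"
    and v_sum: "\<And>k. (\<lambda>j. v j * (q powi j) ^ k) summable_on UNIV"
    and same: "\<And>k. (\<Sum>\<^sub>\<infinity>j. v j * (q powi j) ^ k) = (\<Sum>\<^sub>\<infinity>j. u j * (q powi j) ^ k)"
    and growth: "\<And>n. (\<Sum>\<^sub>\<infinity>j. u j * (q powi j) ^ (4 * n)) \<le> C / q ^ (n\<^sup>2)"
  shows "v = u"
proof
  fix t
  define a where "a j = v j - u j" for j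
  have moments: "((\<lambda>j. a j * (q powi j) ^ m) has_sum 0) UNIV" for m
  proof -
    have "((\<lambda>j. v j * (q powi j) ^ m + (- 1) * (u j * (q powi j) ^ m)) has_sum
        (\<Sum>\<^sub>\<infinity>j. v j * (q powi j) ^ m) + (- 1) * (\<Sum>\<^sub>\<infinity>j. u j * (q powi j) ^ m)) UNIV"
      by (intro has_sum_add has_sum_cmult_right has_sum_infsum u_sum v_sum)
    then show ?thesis
      by (simp add: a_def same[of m] left_diff_distrib)
  qed
  have growth_a: "(\<Sum>\<^sub>\<infinity>j. \<bar>a j\<bar> * (q powi j) ^ (4 * n)) \<le> (2 * C) / q ^ (n\<^sup>2)" for n
  proof -
    have "(\<Sum>\<^sub>\<infinity>j. \<bar>a j\<bar> * (q powi j) ^ (4 * n)) \<le> 2 * (\<Sum>\<^sub>\<infinity>j. u j * (q powi j) ^ (4 * n))"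
      unfolding a_def using nonneg q u_sum v_sum same by (intro infsum_abs_diff_le) auto
    then show ?thesis
      using growth[of n] by simp
  qed
  show "v t = u t"
    using lattice_moment_uniqueness[OF q moments growth_a] by (simp add: a_def)
qed

section \<open>Lattice masses of q-densities\<close>

definition lattice_mass :: "real measure \<Rightarrow> real \<Rightarrow> int \<Rightarrow> real" where
  "lattice_mass M q j = cdf M (q powi j) - cdf M (q powi (j + 1))"

lemma q_density_cdf_diff:
  assumes h: "is_q_density q M h" and "0 < q" "0 < x"
  shows "cdf M x - cdf M (q * x) = x * (1 - q) * h x"
proof -
  define s where "s i = x * (1 - q) * h (x * q ^ i) * q ^ i" for i
  have "s sums cdf M x"
    using h \<open>0 < x\<close> unfolding is_q_density_def s_def by blast
  moreover have "(\<lambda>i. s (Suc i)) sums cdf M (q * x)"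
  proof -
    have "(\<lambda>i. (q * x) * (1 - q) * h ((q * x) * q ^ i) * q ^ i) sums cdf M (q * x)"
      using h assms unfolding is_q_density_def by simp
    moreover have "s (Suc i) = (q * x) * (1 - q) * h ((q * x) * q ^ i) * q ^ i" for i
      by (simp add: s_def mult_ac)
    ultimately show ?thesis by simp
  qed
  then have "s sums (cdf M (q * x) + s 0)"
    by (simp add: sums_Suc_iff)
  ultimately have "cdf M x = cdf M (q * x) + s 0"
    by (rule sums_unique2)
  then show ?thesis
    by (simp add: s_def)
qed

lemma lattice_mass_q_density:
  assumes "is_q_density q M h" "0 < q"
  shows "lattice_mass M q j = (1 - q) * q powi j * h (q powi j)"
  using q_density_cdf_diff[OF assms, of "q powi j"] assms(2)
  by (simp add: lattice_mass_def power_int_add_1' mult_ac)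

lemma q_moment_term_lattice_mass:
  assumes "is_q_density q M h" "0 < q"
  shows "(1 - q) * (q powi (j * (int k + 1)) * h (q powi j)) = lattice_mass M q j * (q powi j) ^ k"
proof -
  have "q powi (j * (int k + 1)) = (q powi j) ^ Suc k"
    using assms(2) by (simp add: power_int_power' distrib_left power_int_add)
  then show ?thesis
    using assms by (simp add: lattice_mass_q_density mult_ac)
qed

lemma q_density_cdf_eq_0:
  assumes "is_q_density q M h" "0 < x" "\<And>i. h (x * q ^ i) = 0"
  shows "cdf M x = 0"
proof -
  have "(\<lambda>i. x * (1 - q) * h (x * q ^ i) * q ^ i) sums cdf M x"
    using assms(1,2) unfolding is_q_density_def by blast
  then have "(\<lambda>i. 0) sums cdf M x"
    using assms(3) by simp
  then show ?thesis
    using sums_zero sums_unique2 by blast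
qed

context real_distribution
begin

lemma lattice_mass_nonneg:
  assumes "0 < q" "q < 1"
  shows "0 \<le> lattice_mass M q j"
  using assms power_int_decreasing[of j "j + 1" q]
  by (simp add: lattice_mass_def cdf_nondecreasing)

lemma q_density_nonzero_on_lattice:
  assumes q: "0 < q" "q < 1" and h: "is_q_density q M h"
  shows "\<exists>j. h (q powi j) \<noteq> 0"
proof (rule ccontr)
  assume "\<not> (\<exists>j. h (q powi j) \<noteq> 0)"
  then have zero: "h (q powi j) = 0" for j
    by simp
  have cdf_zero: "cdf M (q powi j) = 0" for j
  proof (rule q_density_cdf_eq_0[OF h])
    show "0 < q powi j"
      using q by simp
    show "h (q powi j * q ^ i) = 0" for i
      using zero[of "j + int i"] q by (simp add: power_int_add)
  qed
  have "\<forall>\<^sub>F y in at_top. 1 / 2 < cdf M y"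
    using cdf_lim_at_top_prob by (rule order_tendstoD) simp
  then obtain y where y: "1 / 2 < cdf M y"
    by (auto simp: eventually_at_top_linorder)
  obtain m where "y < inverse q ^ m"
    using q real_arch_pow[of "inverse q" y] by (auto simp: one_less_inverse_iff)
  also have "inverse q ^ m = q powi (- int m)"
    by (simp add: power_int_minus power_inverse)
  finally have "cdf M y \<le> cdf M (q powi (- int m))"
    by (intro cdf_nondecreasing) simp
  then show False
    using y cdf_zero by simp
qed

end

lemma lattice_moments_eq_if_q_moments_eq:
  assumes q: "0 < q" "q < 1" and N: "real_distribution N"
    and g: "is_q_density q N g" and f: "is_q_density q M f"
    and moments: "\<And>k. q_moment_exists q g k \<and> q_moment q g k = q_moment q f k"
  shows "(\<lambda>j. lattice_mass N q j * (q powi j) ^ k) summable_on UNIV"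
    and "(\<lambda>j. lattice_mass M q j * (q powi j) ^ k) summable_on UNIV"
    and "(\<Sum>\<^sub>\<infinity>j. lattice_mass N q j * (q powi j) ^ k) = (\<Sum>\<^sub>\<infinity>j. lattice_mass M q j * (q powi j) ^ k)"
proof -
  define G where "G j = q powi (j * (int k + 1)) * g (q powi j)" for j
  define F where "F j = q powi (j * (int k + 1)) * f (q powi j)" for j
  have G_eq: "lattice_mass N q j * (q powi j) ^ k = (1 - q) * G j" for j
    using q_moment_term_lattice_mass[OF g q(1)] by (simp add: G_def)
  have F_eq: "lattice_mass M q j * (q powi j) ^ k = (1 - q) * F j" for j
    using q_moment_term_lattice_mass[OF f q(1)] by (simp add: F_def)
  have G_sum: "G summable_on UNIV"
    using moments[of k] by (simp add: q_moment_exists_def G_def[abs_def])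
  have same: "infsum G UNIV = infsum F UNIV"
    using moments[of k] q by (simp add: q_moment_def G_def[abs_def] F_def[abs_def])
  have G_nonneg: "0 \<le> G j" for j
  proof -
    have "0 \<le> (1 - q) * G j"
      using real_distribution.lattice_mass_nonneg[OF N q] q by (simp flip: G_eq)
    then show ?thesis
      using q by (simp add: zero_le_mult_iff)
  qed
  obtain j0 where "g (q powi j0) \<noteq> 0"
    using real_distribution.q_density_nonzero_on_lattice[OF N q g] by blast
  then have "0 < G j0"
    using G_nonneg[of j0] q by (simp add: G_def order_less_le)
  also have "G j0 \<le> infsum G UNIV"
    using finite_sum_le_infsum[OF G_sum, of "{j0}"] G_nonneg by simp
  finally have "infsum F UNIV \<noteq> 0"
    using same by simp
  \<comment> \<open>q_moment is an infsum, so it is 0 on a non-summable series; positivity of the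
      q-moments of g is what makes the series of f summable.\<close>
  then have F_sum: "F summable_on UNIV"
    using infsum_not_exists by blast
  show "(\<lambda>j. lattice_mass N q j * (q powi j) ^ k) summable_on UNIV"
    unfolding G_eq by (intro summable_on_cmult_right G_sum)
  show "(\<lambda>j. lattice_mass M q j * (q powi j) ^ k) summable_on UNIV"
    unfolding F_eq by (intro summable_on_cmult_right F_sum)
  show "(\<Sum>\<^sub>\<infinity>j. lattice_mass N q j * (q powi j) ^ k) = (\<Sum>\<^sub>\<infinity>j. lattice_mass M q j * (q powi j) ^ k)"
    unfolding G_eq F_eq using same by (simp add: infsum_cmult_right')
qed

section \<open>The generalized gamma distribution\<close>

definition gg_const :: "real \<Rightarrow> real \<Rightarrow> real \<Rightarrow> real" where
  "gg_const \<alpha> \<beta> \<gamma> = \<gamma> * \<beta> powr (- \<alpha> / \<gamma>) / Gamma (\<alpha> / \<gamma>)"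

lemma gg_const_pos: "0 < \<alpha> \<Longrightarrow> 0 < \<beta> \<Longrightarrow> 0 < \<gamma> \<Longrightarrow> 0 < gg_const \<alpha> \<beta> \<gamma>"
  by (simp add: gg_const_def)

lemma gg_density_eq: "gg_density \<alpha> \<beta> \<gamma> t = gg_const \<alpha> \<beta> \<gamma> * t powr (\<alpha> - 1) * exp (- (t powr \<gamma>) / \<beta>)"
  by (simp add: gg_density_def gg_const_def)

lemma emeasure_gen_gamma_dist:
  assumes "A \<in> sets borel"
  shows "emeasure (gen_gamma_dist \<alpha> \<beta> \<gamma>) A
    = (\<integral>\<^sup>+ t. ennreal (if t > 0 then gg_density \<alpha> \<beta> \<gamma> t else 0) * indicator A t \<partial>lborel)"
proof -
  have "(\<lambda>t. ennreal (if t > 0 then gg_density \<alpha> \<beta> \<gamma> t else 0)) \<in> borel_measurable borel"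
    unfolding gg_density_def by measurable
  then show ?thesis
    unfolding gen_gamma_dist_def using assms by (intro emeasure_density) auto
qed

lemma gen_gamma_emeasure_atMost_finite:
  assumes "0 < \<alpha>" "0 < \<beta>" "0 < \<gamma>"
  shows "emeasure (gen_gamma_dist \<alpha> \<beta> \<gamma>) {..x} \<noteq> \<infinity>"
proof -
  define K where "K = gg_const \<alpha> \<beta> \<gamma>"
  define c where "c = max x 0"
  have K: "0 < K"
    using assms by (simp add: K_def gg_const_pos)
  have "(\<lambda>t. t powr (\<alpha> - 1)) integrable_on {0<..c}"
    using assms by (intro integrable_on_powr_from_0') (auto simp: c_def)
  from integrable_on_cmult_left[OF this, of K]
  have "(\<lambda>t. K * t powr (\<alpha> - 1)) integrable_on {0<..c}"
    by simp
  then obtain I where I: "((\<lambda>t. K * t powr (\<alpha> - 1)) has_integral I) {0<..c}"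
    unfolding integrable_on_def by blast
  have "emeasure (gen_gamma_dist \<alpha> \<beta> \<gamma>) {..x}
      \<le> (\<integral>\<^sup>+ t. ennreal (K * t powr (\<alpha> - 1)) * indicator {0<..c} t \<partial>lborel)"
    unfolding emeasure_gen_gamma_dist[of "{..x}", simplified]
  proof (rule nn_integral_mono)
    fix t :: real
    have "gg_density \<alpha> \<beta> \<gamma> t \<le> K * t powr (\<alpha> - 1)" if "0 < t"
      using K assms unfolding gg_density_eq K_def by (intro mult_left_le) auto
    then show "ennreal (if t > 0 then gg_density \<alpha> \<beta> \<gamma> t else 0) * indicator {..x} t
        \<le> ennreal (K * t powr (\<alpha> - 1)) * indicator {0<..c} t"
      by (auto simp: indicator_def c_def intro!: ennreal_leI)
  qed
  also have "\<dots> = ennreal I"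
    using I K by (intro nn_integral_has_integral_lebesgue') auto
  finally show ?thesis
    unfolding infinity_ennreal_def by (rule neq_top_trans[OF ennreal_neq_top])
qed

lemma gen_gamma_measure_Ioc:
  assumes "0 < \<alpha>" "0 < \<beta>" "0 < \<gamma>" "a \<le> b"
  shows "measure (gen_gamma_dist \<alpha> \<beta> \<gamma>) {a<..b}
    = cdf (gen_gamma_dist \<alpha> \<beta> \<gamma>) b - cdf (gen_gamma_dist \<alpha> \<beta> \<gamma>) a"
proof -
  have "{a<..b} = {..b} - {..a}"
    using assms by auto
  then show ?thesis
    using gen_gamma_emeasure_atMost_finite[OF assms(1-3), of b] assms(4)
    by (simp add: cdf_def measure_Diff gen_gamma_dist_def)
qed

lemma gen_gamma_measure_Ioc_le:
  assumes "0 < \<alpha>" "0 < \<beta>" "0 < \<gamma>" "1 \<le> a" "a \<le> b"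
  shows "measure (gen_gamma_dist \<alpha> \<beta> \<gamma>) {a<..b}
    \<le> gg_const \<alpha> \<beta> \<gamma> * b powr \<alpha> * exp (- (a powr \<gamma>) / \<beta>) * (b - a)"
proof -
  define C where "C = gg_const \<alpha> \<beta> \<gamma> * b powr \<alpha> * exp (- (a powr \<gamma>) / \<beta>)"
  have K: "0 < gg_const \<alpha> \<beta> \<gamma>"
    using assms by (simp add: gg_const_pos)
  have density_le: "gg_density \<alpha> \<beta> \<gamma> t \<le> C" if "a < t" "t \<le> b" for t
  proof -
    have "t powr (\<alpha> - 1) \<le> b powr \<alpha>"
      using that assms powr_mono[of "\<alpha> - 1" \<alpha> t] powr_mono2[of \<alpha> t b] by linarith
    moreover have "exp (- (t powr \<gamma>) / \<beta>) \<le> exp (- (a powr \<gamma>) / \<beta>)"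
      using that assms powr_mono2[of \<gamma> a t] by (simp add: divide_right_mono)
    ultimately show ?thesis
      using K unfolding gg_density_eq C_def by (intro mult_mono mult_left_mono) auto
  qed
  have "emeasure (gen_gamma_dist \<alpha> \<beta> \<gamma>) {a<..b} \<le> (\<integral>\<^sup>+ t. ennreal C * indicator {a<..b} t \<partial>lborel)"
    unfolding emeasure_gen_gamma_dist[of "{a<..b}", simplified]
    using density_le assms by (intro nn_integral_mono) (auto simp: indicator_def intro!: ennreal_leI)
  also have "\<dots> = ennreal (C * (b - a))"
    using assms K by (simp add: nn_integral_cmult_indicator ennreal_mult C_def)
  finally show ?thesis
    using assms K by (simp add: C_def measure_def enn2real_leI)
qed

lemma gen_gamma_lattice_mass:
  assumes "0 < \<alpha>" "0 < \<beta>" "0 < \<gamma>" "0 < q" "q < 1"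
  shows "lattice_mass (gen_gamma_dist \<alpha> \<beta> \<gamma>) q j
    = measure (gen_gamma_dist \<alpha> \<beta> \<gamma>) {q powi (j + 1)<..q powi j}"
  using gen_gamma_measure_Ioc[OF assms(1-3), of "q powi (j + 1)" "q powi j"]
    power_int_decreasing[of j "j + 1" q] assms(4,5)
  by (simp add: lattice_mass_def)

lemma gen_gamma_lattice_mass_nonneg:
  assumes "0 < \<alpha>" "0 < \<beta>" "0 < \<gamma>" "0 < q" "q < 1"
  shows "0 \<le> lattice_mass (gen_gamma_dist \<alpha> \<beta> \<gamma>) q j"
  by (simp add: gen_gamma_lattice_mass[OF assms])

lemma gen_gamma_lattice_mass_le:
  assumes "0 < \<alpha>" "0 < \<beta>" "0 < \<gamma>" "0 < q" "q < 1" "j < 0"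
  shows "lattice_mass (gen_gamma_dist \<alpha> \<beta> \<gamma>) q j
    \<le> gg_const \<alpha> \<beta> \<gamma> * (q powi j) powr (\<alpha> + 1) * exp (- ((q powi (j + 1)) powr \<gamma>) / \<beta>)"
proof -
  define a b where "a = q powi (j + 1)" and "b = q powi j"
  have ab: "1 \<le> a" "a \<le> b" "0 < a"
    using assms power_int_decreasing[of "j + 1" 0 q] power_int_decreasing[of j "j + 1" q]
    by (auto simp: a_def b_def)
  have "lattice_mass (gen_gamma_dist \<alpha> \<beta> \<gamma>) q j
      \<le> gg_const \<alpha> \<beta> \<gamma> * b powr \<alpha> * exp (- (a powr \<gamma>) / \<beta>) * (b - a)"
    unfolding gen_gamma_lattice_mass[OF assms(1-5)] a_def[symmetric] b_def[symmetric]
    using assms ab by (intro gen_gamma_measure_Ioc_le) auto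
  also have "\<dots> \<le> gg_const \<alpha> \<beta> \<gamma> * b powr \<alpha> * exp (- (a powr \<gamma>) / \<beta>) * b"
    using assms ab gg_const_pos[of \<alpha> \<beta> \<gamma>] by (intro mult_left_mono) auto
  also have "\<dots> = gg_const \<alpha> \<beta> \<gamma> * b powr (\<alpha> + 1) * exp (- (a powr \<gamma>) / \<beta>)"
    using ab by (simp add: powr_add)
  finally show ?thesis
    by (simp add: a_def b_def)
qed

text \<open>For j < 0: the mass bound of gen_gamma_lattice_mass_le multiplied by the Gaussian
  factor q powi (-4 j^2) from power_int_power_le_gaussian.\<close>

definition gg_tail_weight :: "real \<Rightarrow> real \<Rightarrow> real \<Rightarrow> real \<Rightarrow> int \<Rightarrow> real" where
  "gg_tail_weight \<alpha> \<beta> \<gamma> q j = (if j < 0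
     then q powi (- 4 * j\<^sup>2) * (q powi j) powr (\<alpha> + 1) * exp (- ((q powi (j + 1)) powr \<gamma>) / \<beta>)
     else 0)"

lemma gg_tail_weight_summable:
  assumes "0 < \<beta>" "0 < \<gamma>" "0 < q" "q < 1"
  shows "gg_tail_weight \<alpha> \<beta> \<gamma> q summable_on UNIV"
proof (rule summable_on_int_if_summable_on_nonpos)
  define L where "L = - ln q"
  define c where "c = exp (- \<gamma> * L) / \<beta>"
  have L: "0 < L" and c: "0 < c"
    using assms by (auto simp: L_def c_def)
  have q_powi: "q powi j = exp (- L * of_int j)" for j
    using assms exp_power_int[of "ln q" j] by (simp add: L_def)
  have "summable (\<lambda>n::nat. exp (4 * L * real n ^ 2 + (\<alpha> + 1) * L * real n - c * exp (\<gamma> * L * real n)))"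
    using c L assms by (intro summable_exp_quadratic_minus_exp) auto
  then have "(\<lambda>n::nat. exp (4 * L * real n ^ 2 + (\<alpha> + 1) * L * real n - c * exp (\<gamma> * L * real n)))
      summable_on UNIV"
    by (simp add: summable_on_UNIV_nonneg_real_iff)
  moreover have "gg_tail_weight \<alpha> \<beta> \<gamma> q (- int n)
      \<le> exp (4 * L * real n ^ 2 + (\<alpha> + 1) * L * real n - c * exp (\<gamma> * L * real n))" for n
  proof (cases "n = 0")
    case False
    have "(q powi (- int n + 1)) powr \<gamma> / \<beta> = c * exp (\<gamma> * L * real n)"
      by (simp add: q_powi powr_def c_def algebra_simps flip: exp_add)
    then show ?thesis
      using False by (simp add: gg_tail_weight_def q_powi powr_def algebra_simps flip: exp_add exp_diff)
  qed (simp add: gg_tail_weight_def)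
  ultimately show "(\<lambda>n::nat. gg_tail_weight \<alpha> \<beta> \<gamma> q (- int n)) summable_on UNIV"
    by (rule summable_on_comparison_test) (use assms in \<open>simp add: gg_tail_weight_def\<close>)
qed (simp add: gg_tail_weight_def)

lemma gen_gamma_lattice_moment_le:
  assumes abc: "0 < \<alpha>" "0 < \<beta>" "0 < \<gamma>" and q: "0 < q" "q < 1"
  shows "lattice_mass (gen_gamma_dist \<alpha> \<beta> \<gamma>) q j * (q powi j) ^ (4 * n)
    \<le> lattice_mass (gen_gamma_dist \<alpha> \<beta> \<gamma>) q j
      + gg_const \<alpha> \<beta> \<gamma> / q ^ (n\<^sup>2) * gg_tail_weight \<alpha> \<beta> \<gamma> q j"
proof (cases "j < 0")
  case False
  then have "(q powi j) ^ (4 * n) \<le> 1"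
    using q power_int_decreasing[of 0 j q] by (intro power_le_one) auto
  then show ?thesis
    using False gen_gamma_lattice_mass_nonneg[OF abc q, of j]
    by (simp add: gg_tail_weight_def mult_left_le)
next
  case True
  have "lattice_mass (gen_gamma_dist \<alpha> \<beta> \<gamma>) q j * (q powi j) ^ (4 * n)
      \<le> (gg_const \<alpha> \<beta> \<gamma> * (q powi j) powr (\<alpha> + 1) * exp (- ((q powi (j + 1)) powr \<gamma>) / \<beta>))
        * (q powi (- 4 * j\<^sup>2) / q ^ (n\<^sup>2))"
    using gen_gamma_lattice_mass_le[OF abc q True] power_int_power_le_gaussian[of q j n]
      gen_gamma_lattice_mass_nonneg[OF abc q, of j] q
    by (intro mult_mono) auto
  also have "\<dots> = gg_const \<alpha> \<beta> \<gamma> / q ^ (n\<^sup>2) * gg_tail_weight \<alpha> \<beta> \<gamma> q j"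
    using True by (simp add: gg_tail_weight_def)
  finally show ?thesis
    using gen_gamma_lattice_mass_nonneg[OF abc q, of j] by simp
qed

lemma gen_gamma_lattice_moment_growth:
  fixes \<alpha> \<beta> \<gamma> q :: real
  assumes abc: "0 < \<alpha>" "0 < \<beta>" "0 < \<gamma>" and q: "0 < q" "q < 1"
    and summable: "lattice_mass (gen_gamma_dist \<alpha> \<beta> \<gamma>) q summable_on UNIV"
  obtains C where "\<And>n. (\<Sum>\<^sub>\<infinity>j. lattice_mass (gen_gamma_dist \<alpha> \<beta> \<gamma>) q j * (q powi j) ^ (4 * n)) \<le> C / q ^ (n\<^sup>2)"
proof -
  define u where "u = lattice_mass (gen_gamma_dist \<alpha> \<beta> \<gamma>) q"
  define w where "w = gg_tail_weight \<alpha> \<beta> \<gamma> q"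
  define K where "K = gg_const \<alpha> \<beta> \<gamma>"
  have u_nonneg: "0 \<le> u j" for j
    unfolding u_def using abc q by (rule gen_gamma_lattice_mass_nonneg)
  have w_sum: "w summable_on UNIV"
    unfolding w_def using abc q by (intro gg_tail_weight_summable)
  have "(\<Sum>\<^sub>\<infinity>j. u j * (q powi j) ^ (4 * n)) \<le> (infsum u UNIV + K * infsum w UNIV) / q ^ (n\<^sup>2)" for n
  proof -
    have bound_sum: "(\<lambda>j. u j + K / q ^ (n\<^sup>2) * w j) summable_on UNIV"
      using summable w_sum unfolding u_def by (intro summable_on_add summable_on_cmult_right)
    have pointwise: "u j * (q powi j) ^ (4 * n) \<le> u j + K / q ^ (n\<^sup>2) * w j" for j
      unfolding u_def w_def K_def using abc q by (rule gen_gamma_lattice_moment_le)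
    have "(\<Sum>\<^sub>\<infinity>j. u j * (q powi j) ^ (4 * n)) \<le> (\<Sum>\<^sub>\<infinity>j. u j + K / q ^ (n\<^sup>2) * w j)"
    proof (rule infsum_mono[OF _ bound_sum pointwise])
      show "(\<lambda>j. u j * (q powi j) ^ (4 * n)) summable_on UNIV"
        using bound_sum pointwise by (rule summable_on_comparison_test) (use u_nonneg q in simp)
    qed
    also have "\<dots> = infsum u UNIV + (\<Sum>\<^sub>\<infinity>j. K / q ^ (n\<^sup>2) * w j)"
      using summable w_sum unfolding u_def by (intro infsum_add summable_on_cmult_right)
    also have "\<dots> = infsum u UNIV + K / q ^ (n\<^sup>2) * infsum w UNIV"
      by (simp only: infsum_cmult_right')
    also have "\<dots> \<le> (infsum u UNIV + K * infsum w UNIV) / q ^ (n\<^sup>2)"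
    proof -
      have "0 \<le> infsum u UNIV" "q ^ (n\<^sup>2) \<le> 1"
        using u_nonneg q by (auto simp: infsum_nonneg power_le_one)
      then have "infsum u UNIV \<le> infsum u UNIV / q ^ (n\<^sup>2)"
        using q by (simp add: le_divide_eq mult_left_le)
      moreover have "K / q ^ (n\<^sup>2) * infsum w UNIV = K * infsum w UNIV / q ^ (n\<^sup>2)"
        by simp
      ultimately show ?thesis
        by (simp only: add_divide_distrib)
    qed
    finally show ?thesis .
  qed
  then show ?thesis
    using that unfolding u_def by blast
qed

theorem mainTheorem8:
  fixes \<alpha> \<beta> \<gamma> q :: real
  assumes "\<alpha> > 0" and "\<beta> > 0" and "\<gamma> > 0"
    and "0 < q" and "q < 1"
  shows "q_moment_determinate q (gen_gamma_dist \<alpha> \<beta> \<gamma>)"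
  unfolding q_moment_determinate_def
proof (intro allI impI)
  fix f N g j
  define X where "X = gen_gamma_dist \<alpha> \<beta> \<gamma>"
  assume f: "is_q_density q (gen_gamma_dist \<alpha> \<beta> \<gamma>) f"
  assume "prob_space N \<and> sets N = sets borel \<and> measure N {..<0} = 0 \<and> is_q_density q N g \<and>
    (\<forall>k. q_moment_exists q g k \<and> q_moment q g k = q_moment q f k)"
  then have N: "real_distribution N" and g: "is_q_density q N g"
    and moments: "\<And>k. q_moment_exists q g k \<and> q_moment q g k = q_moment q f k"
    by (auto simp: real_distribution_def real_distribution_axioms_def)
  note lattice = lattice_moments_eq_if_q_moments_eq[OF assms(4,5) N g f moments, folded X_def]
  obtain C where growth: "\<And>n. (\<Sum>\<^sub>\<infinity>j. lattice_mass X q j * (q powi j) ^ (4 * n)) \<le> C / q ^ (n\<^sup>2)"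
    using gen_gamma_lattice_moment_growth[OF assms, folded X_def] lattice(2)[of 0] by auto
  have "lattice_mass N q = lattice_mass X q"
    using assms lattice growth unfolding X_def
    by (intro nonneg_lattice_moments_unique[where C = C])
      (auto intro: real_distribution.lattice_mass_nonneg[OF N] gen_gamma_lattice_mass_nonneg)
  then show "g (q powi j) = f (q powi j)"
    using lattice_mass_q_density[OF g assms(4)] lattice_mass_q_density[OF f assms(4)] assms(4,5)
    by (simp add: X_def fun_eq_iff)
qed

end
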